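(* For every $m\in\mathbb{N}$ and $\alpha\in\mathcal{C}_m$, the rank of $W_\alpha$ is $m$ if all $\alpha_i$ are even, and $m-\#^{\mathsf{odd}}_\alpha+1$ otherwise.
   Context: $\mathcal{C}_m$ is the set of compositions of $m$ (tuples $\alpha=(\alpha_1,\dots,\alpha_N)$ of positive integers summing to $m$); $\#^{\mathsf{odd}}_\alpha$ is the number of odd entries. Let $E^j:[0,1]\to\mathbb{R}^m$, $t\mapsto te_j$; concatenation $(X\star Y)(t)=X(2t)$ for $t<\frac12$, $X(1)+Y(2t-1)$ for $t\ge\frac12$; $\mathsf{Ax}^{\alpha,i}=E^{\alpha_1+\dots+\alpha_{i-1}+1}\star\dots\star E^{\alpha_1+\dots+\alpha_i}$. $\sigma(X)=1\oplus(X(1)-X(0))\oplus\big(\int_{0<t_1<t_2<1}\dot X_a(t_1)\dot X_b(t_2)dt_1dt_2\big)_{a,b}$ is the $2$-truncated signature, in the free nilpotent Lie group $\mathcal{G}_{m,2}=\exp(\mathfrak{g}_{m,2})\subset T_{m,2}=\mathbb{R}\oplus\mathbb{R}^m\oplus\mathbb{R}^{m\times m}$ (truncated tensor product, $\exp(\mathbf{z})=1+\mathbf{z}+\mathbf{z}^{\otimes2}/2$, $\log=\exp^{-1}$). The barycenter of $\mathbf{x}\in\mathcal{G}_{m,2}^N$ is the unique $\mathbf{m}$ with $\sum_i\log(\mathbf{m}^{-1}\mathbf{x}_i)=0$, and $W_\alpha\in\mathbb{R}^{m\times m}$ is the level-2 component of $\mathsf{bary}(\sigma(\mathsf{Ax}^{\alpha,1}),\dots,\sigma(\mathsf{Ax}^{\alpha,N}))$.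 *)

theory Defs
  imports "HOL-Analysis.Henstock_Kurzweil_Integration" "Jordan_Normal_Form.DL_Rank"
begin

definition compositions :: "nat \<Rightarrow> nat list set" where
  "compositions m = {\<alpha>. (\<forall>x\<in>set \<alpha>. 0 < x) \<and> sum_list \<alpha> = m}"

definition num_odd :: "nat list \<Rightarrow> nat" where
  "num_odd \<alpha> = length (filter odd \<alpha>)"

text \<open>Coordinates are indexed by 1..m; an element is (level 0, level 1, level 2).\<close>

type_synonym tens2 = "real \<times> (nat \<Rightarrow> real) \<times> (nat \<Rightarrow> nat \<Rightarrow> real)"

definition T2 :: "nat \<Rightarrow> tens2 set" where
  "T2 m = {(c, v, A). (\<forall>j. j \<notin> {1..m} \<longrightarrow> v j = 0) \<and>
                      (\<forall>a b. a \<notin> {1..m} \<or> b \<notin> {1..m} \<longrightarrow> A a b = 0)}"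

definition tzero :: tens2 where "tzero = (0, (\<lambda>_. 0), (\<lambda>_ _. 0))"
definition tone :: tens2 where "tone = (1, (\<lambda>_. 0), (\<lambda>_ _. 0))"

definition tadd :: "tens2 \<Rightarrow> tens2 \<Rightarrow> tens2" where
  "tadd x y = (case x of (x0, x1, x2) \<Rightarrow> case y of (y0, y1, y2) \<Rightarrow>
      (x0 + y0, \<lambda>a. x1 a + y1 a, \<lambda>a b. x2 a b + y2 a b))"

definition tscale :: "real \<Rightarrow> tens2 \<Rightarrow> tens2" where
  "tscale r x = (case x of (x0, x1, x2) \<Rightarrow> (r * x0, \<lambda>a. r * x1 a, \<lambda>a b. r * x2 a b))"

definition tmult :: "tens2 \<Rightarrow> tens2 \<Rightarrow> tens2" where
  "tmult x y = (case x of (x0, x1, x2) \<Rightarrow> case y of (y0, y1, y2) \<Rightarrow>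
      (x0 * y0, \<lambda>a. x0 * y1 a + x1 a * y0, \<lambda>a b. x0 * y2 a b + x1 a * y1 b + x2 a b * y0))"

definition tsum :: "tens2 list \<Rightarrow> tens2" where
  "tsum xs = foldr tadd xs tzero"

definition tinv :: "tens2 \<Rightarrow> tens2" where
  "tinv x = (THE y. tmult x y = tone \<and> tmult y x = tone)"

definition texp :: "tens2 \<Rightarrow> tens2" where
  "texp z = tadd tone (tadd z (tscale (1/2) (tmult z z)))"

text \<open>Free 2-step nilpotent Lie algebra g_{m,2} = R^m + [R^m,R^m] inside T_{m,2}:
  level 0 vanishes, level 1 arbitrary, level 2 in the span of the brackets
  e_a\<otimes>e_b - e_b\<otimes>e_a, i.e. antisymmetric.\<close>
definition g2 :: "nat \<Rightarrow> tens2 set" where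
  "g2 m = {(c, v, A) \<in> T2 m. c = 0 \<and> (\<forall>a b. A a b = - A b a)}"

definition G2 :: "nat \<Rightarrow> tens2 set" where
  "G2 m = texp ` g2 m"

definition tlog :: "nat \<Rightarrow> tens2 \<Rightarrow> tens2" where
  "tlog m y = (THE z. z \<in> g2 m \<and> texp z = y)"

definition bary :: "nat \<Rightarrow> tens2 list \<Rightarrow> tens2" where
  "bary m xs = (THE mm. mm \<in> G2 m \<and> tsum (map (\<lambda>x. tlog m (tmult (tinv mm) x)) xs) = tzero)"

type_synonym rpath = "real \<Rightarrow> nat \<Rightarrow> real"

definition Epath :: "nat \<Rightarrow> rpath" where
  "Epath j = (\<lambda>t k. if k = j then t else 0)"

definition pconcat :: "rpath \<Rightarrow> rpath \<Rightarrow> rpath" (infixr "\<star>" 65) where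
  "pconcat X Y = (\<lambda>t. if t < 1/2 then X (2 * t) else (\<lambda>k. X 1 k + Y (2 * t - 1) k))"

fun axis_concat :: "nat list \<Rightarrow> rpath" where
  "axis_concat [] = (\<lambda>t k. 0)"
| "axis_concat [j] = Epath j"
| "axis_concat (j # js) = Epath j \<star> axis_concat js"

text \<open>Ax^{\<alpha>,i} for 1 \<le> i \<le> N (alpha stored as a 0-indexed list).\<close>
definition Ax :: "nat list \<Rightarrow> nat \<Rightarrow> rpath" where
  "Ax \<alpha> i = (let s = sum_list (take (i - 1) \<alpha>) in axis_concat [s + 1 ..< s + \<alpha> ! (i - 1) + 1])"

definition sig2 :: "rpath \<Rightarrow> tens2" where
  "sig2 X = (1, \<lambda>a. X 1 a - X 0 a,
     \<lambda>a b. integral {p :: real \<times> real. 0 < fst p \<and> fst p < snd p \<and> snd p < 1}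
               (\<lambda>p. deriv (\<lambda>t. X t a) (fst p) * deriv (\<lambda>t. X t b) (snd p)))"

definition W :: "nat list \<Rightarrow> nat \<Rightarrow> nat \<Rightarrow> real" where
  "W \<alpha> = snd (snd (bary (sum_list \<alpha>) (map (\<lambda>i. sig2 (Ax \<alpha> i)) [1 ..< length \<alpha> + 1])))"

text \<open>W_\<alpha> as an m x m JNF matrix (entry (i,j) for 0-based i,j is W_\<alpha>(i+1,j+1)).\<close>
definition W_mat :: "nat \<Rightarrow> nat list \<Rightarrow> real Matrix.mat" where
  "W_mat m \<alpha> = Matrix.mat m m (\<lambda>(i, j). W \<alpha> (i + 1) (j + 1))"

end

(*
  The axis path through e_(s+1), ..., e_(s+n) has 2-truncated signature exp(b), where the first
  level of b is the indicator of the block {s+1..s+n} and the second level is half the sign of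
  b - a on the block (its Levy area).  In the free step-2 nilpotent group the barycenter of
  exponentials is the exponential of the arithmetic mean: by Baker-Campbell-Hausdorff the
  balance equation is linear up to a bracket of the mean with itself.  Hence, with N blocks,
  W_alpha = S/(2N) + E/(2N^2), where S is block diagonal with the skew sign matrices of the
  blocks and E is the all-ones matrix.

  On a single block of length k, a vector y with (S_k y)_p + c = 0 for all p must alternate in
  sign, and then c = y_0 if k is even and c = 0 if k is odd.  So a kernel vector of W_alpha
  alternates on every block; its total sum vanishes as soon as some block is odd, which kills
  all even blocks, and on the odd blocks it is free up to the single constraint that its entries
  at the block starts sum to zero.  The kernel is therefore trivial if all parts are even and
  has dimension #odd - 1 otherwise.
*)
theory Submission
  imports Defs "HOL-Analysis.Analysis"
begin

section \<open>The free step-2 nilpotent group\<close>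

(* Antisymmetry is stated additively: as a rewrite rule, A a b = - A b a would loop. *)
lemma g2_iff:
  "(c, v, A) \<in> g2 m \<longleftrightarrow> c = 0 \<and> (\<forall>j. j \<notin> {1..m} \<longrightarrow> v j = 0) \<and>
     (\<forall>a b. a \<notin> {1..m} \<or> b \<notin> {1..m} \<longrightarrow> A a b = 0) \<and> (\<forall>a b. A a b + A b a = 0)"
  unfolding g2_def T2_def by (auto simp: eq_neg_iff_add_eq_0)

lemma texp_lie: "texp (0, v, A) = (1, v, \<lambda>a b. A a b + v a * v b / 2)"
  unfolding texp_def tadd_def tone_def tscale_def tmult_def by auto

lemma inj_on_texp_g2: "inj_on texp (g2 m)"
proof (rule inj_onI)
  fix z z' assume "z \<in> g2 m" "z' \<in> g2 m" and eq: "texp z = texp z'"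
  then obtain v A v' A' where z: "z = (0, v, A)" and z': "z' = (0, v', A')"
    by (metis g2_iff prod_cases3)
  from eq have "v = v'" by (simp add: z z' texp_lie)
  with eq show "z = z'" by (simp add: z z' texp_lie fun_eq_iff)
qed

lemma tlog_texp: "z \<in> g2 m \<Longrightarrow> tlog m (texp z) = z"
  unfolding tlog_def by (rule the_equality) (auto dest: inj_onD[OF inj_on_texp_g2])

lemma tinv_group_like: "tinv (1, v, A) = (1, \<lambda>a. - v a, \<lambda>a b. v a * v b - A a b)"
  unfolding tinv_def
proof (rule the_equality)
  show "tmult (1, v, A) (1, \<lambda>a. - v a, \<lambda>a b. v a * v b - A a b) = tone \<and>
        tmult (1, \<lambda>a. - v a, \<lambda>a b. v a * v b - A a b) (1, v, A) = tone"
    by (simp add: tmult_def tone_def fun_eq_iff)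
next
  fix y assume "tmult (1, v, A) y = tone \<and> tmult y (1, v, A) = tone"
  then have right_inv: "tmult (1, v, A) y = tone" ..
  obtain y0 y1 y2 where y: "y = (y0, y1, y2)" by (cases y)
  from right_inv have "y0 = 1" and y1: "\<And>a. y1 a + v a = 0"
    and y2: "\<And>a b. y2 a b + v a * y1 b + A a b = 0"
    by (auto simp: y tmult_def tone_def fun_eq_iff)
  moreover from y1 have "y1 = (\<lambda>a. - v a)"
    by (simp add: fun_eq_iff eq_neg_iff_add_eq_0)
  moreover from y2 have "y2 = (\<lambda>a b. v a * v b - A a b)"
    unfolding \<open>y1 = _\<close> by (simp add: fun_eq_iff algebra_simps eq_diff_eq)
  ultimately show "y = (1, \<lambda>a. - v a, \<lambda>a b. v a * v b - A a b)"
    by (simp add: y)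
qed

(* Baker-Campbell-Hausdorff in step 2: log (exp u^-1 exp z) = z - u - [u, z] / 2. *)
definition bch_diff :: "tens2 \<Rightarrow> tens2 \<Rightarrow> tens2" where
  "bch_diff u z = (0, \<lambda>a. fst (snd z) a - fst (snd u) a,
     \<lambda>a b. snd (snd z) a b - snd (snd u) a b
           + (fst (snd z) a * fst (snd u) b - fst (snd u) a * fst (snd z) b) / 2)"

lemma tmult_tinv_texp:
  "tmult (tinv (texp (0, u, U))) (texp (0, v, A)) = texp (bch_diff (0, u, U) (0, v, A))"
  unfolding texp_lie tinv_group_like bch_diff_def fst_conv snd_conv
  by (simp add: tmult_def fun_eq_iff field_simps)

lemma bch_diff_g2:
  assumes "u \<in> g2 m" "z \<in> g2 m"
  shows "bch_diff u z \<in> g2 m"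
proof -
  obtain u1 U z1 Z where u: "u = (0, u1, U)" and z: "z = (0, z1, Z)"
    using assms by (metis g2_iff prod_cases3)
  from assms have vanish1: "j \<notin> {1..m} \<Longrightarrow> u1 j = 0 \<and> z1 j = 0"
    and vanish2: "a \<notin> {1..m} \<or> b \<notin> {1..m} \<Longrightarrow> U a b = 0 \<and> Z a b = 0" for j a b
    unfolding u z g2_iff by blast+
  have "a \<notin> {1..m} \<or> b \<notin> {1..m} \<Longrightarrow>
      Z a b - U a b + (z1 a * u1 b - u1 a * z1 b) / 2 = 0" for a b
    using vanish1[of a] vanish1[of b] vanish2[of a b] by auto
  moreover have "Z a b - U a b + (z1 a * u1 b - u1 a * z1 b) / 2 +
        (Z b a - U b a + (z1 b * u1 a - u1 b * z1 a) / 2) = 0" for a b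
  proof -
    from assms have "Z b a = - Z a b" "U b a = - U a b"
      unfolding u z g2_iff by (simp_all add: eq_neg_iff_add_eq_0 add.commute)
    then show ?thesis by (simp add: field_simps)
  qed
  moreover have "j \<notin> {1..m} \<Longrightarrow> z1 j - u1 j = 0" for j
    using vanish1 by simp
  ultimately show ?thesis unfolding u z bch_diff_def fst_conv snd_conv g2_iff by blast
qed

lemma tlog_tinv_texp:
  assumes "u \<in> g2 m" "z \<in> g2 m"
  shows "tlog m (tmult (tinv (texp u)) (texp z)) = bch_diff u z"
proof -
  obtain u1 U z1 Z where "u = (0, u1, U)" and "z = (0, z1, Z)"
    using assms by (metis g2_iff prod_cases3)
  then have "tmult (tinv (texp u)) (texp z) = texp (bch_diff u z)"
    by (simp only: tmult_tinv_texp)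
  then show ?thesis using assms by (simp only: tlog_texp bch_diff_g2)
qed

lemma tsum_map:
  "tsum (map f xs) = (\<Sum>x\<leftarrow>xs. fst (f x), \<lambda>a. \<Sum>x\<leftarrow>xs. fst (snd (f x)) a,
                      \<lambda>a b. \<Sum>x\<leftarrow>xs. snd (snd (f x)) a b)"
  unfolding tsum_def by (induction xs) (auto simp: tzero_def tadd_def split: prod.splits)

lemma tadd_g2:
  assumes "x \<in> g2 m" "y \<in> g2 m"
  shows "tadd x y \<in> g2 m"
proof -
  obtain v A w B where x: "x = (0, v, A)" and y: "y = (0, w, B)"
    using assms by (metis g2_iff prod_cases3)
  have "A a b + B a b + (A b a + B b a) = 0" for a b
  proof -
    have "A a b + A b a = 0" "B a b + B b a = 0" using assms unfolding x y g2_iff by blast+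
    then show ?thesis by linarith
  qed
  with assms show ?thesis unfolding x y by (simp add: tadd_def g2_iff)
qed

lemma tscale_g2:
  assumes "x \<in> g2 m"
  shows "tscale r x \<in> g2 m"
proof -
  obtain v A where x: "x = (0, v, A)" using assms by (metis g2_iff prod_cases3)
  have "r * A a b + r * A b a = 0" for a b
  proof -
    have "A a b + A b a = 0" using assms unfolding x g2_iff by blast
    then show ?thesis by (simp add: distrib_left[symmetric])
  qed
  with assms show ?thesis unfolding x by (simp add: tscale_def g2_iff)
qed

lemma tsum_g2: "set zs \<subseteq> g2 m \<Longrightarrow> tsum zs \<in> g2 m"
  by (induction zs) (simp_all add: tsum_def tzero_def g2_iff tadd_g2)

definition tmean :: "tens2 list \<Rightarrow> tens2" where
  "tmean zs = tscale (1 / length zs) (tsum zs)"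

lemma tmean_g2: "set zs \<subseteq> g2 m \<Longrightarrow> tmean zs \<in> g2 m"
  unfolding tmean_def by (intro tscale_g2 tsum_g2)

lemma tsum_bch_diff:
  fixes S1 :: "nat \<Rightarrow> real"
  assumes "tsum zs = (c, S1, S2)"
  shows "tsum (map (bch_diff (0, u, U)) zs) =
    (0, \<lambda>a. S1 a - real (length zs) * u a,
     \<lambda>a b. S2 a b - real (length zs) * U a b + (S1 a * u b - u a * S1 b) / 2)"
proof -
  from assms have "S1 = (\<lambda>a. \<Sum>z\<leftarrow>zs. fst (snd z) a)" "S2 = (\<lambda>a b. \<Sum>z\<leftarrow>zs. snd (snd z) a b)"
    using tsum_map[of id zs] by simp_all
  moreover have halve: "(\<Sum>z\<leftarrow>zs. f z / 2) = (\<Sum>z\<leftarrow>zs. f z) / (2::real)" for f :: "tens2 \<Rightarrow> real"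
    by (induction zs) (simp_all add: add_divide_distrib)
  ultimately show ?thesis
    by (simp add: halve tsum_map bch_diff_def sum_list_subtractf sum_list_addf sum_list_triv
        sum_list_const_mult sum_list_mult_const)
qed

lemma tsum_tlog_eq_tzero_iff:
  assumes zs: "set zs \<subseteq> g2 m" "zs \<noteq> []" and "u \<in> g2 m"
  shows "tsum (map (\<lambda>x. tlog m (tmult (tinv (texp u)) x)) (map texp zs)) = tzero \<longleftrightarrow> u = tmean zs"
proof -
  define N where "N = real (length zs)"
  have "N > 0" using zs(2) by (simp add: N_def)
  obtain c S1 S2 where S: "tsum zs = (c, S1, S2)" by (cases "tsum zs")
  have mean: "tmean zs = (0, \<lambda>a. S1 a / N, \<lambda>a b. S2 a b / N)"
    using tmean_g2[OF zs(1)] by (simp add: tmean_def tscale_def S N_def g2_iff)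
  obtain u1 U where u: "u = (0, u1, U)" using \<open>u \<in> g2 m\<close> by (metis g2_iff prod_cases3)
  have "tsum (map (\<lambda>x. tlog m (tmult (tinv (texp u)) x)) (map texp zs)) =
      tsum (map (bch_diff u) zs)"
    unfolding map_map o_def using zs(1)
    by (intro arg_cong[where f = tsum] map_cong refl tlog_tinv_texp[OF \<open>u \<in> g2 m\<close>]) auto
  also have "\<dots> = (0, \<lambda>a. S1 a - N * u1 a,
      \<lambda>a b. S2 a b - N * U a b + (S1 a * u1 b - u1 a * S1 b) / 2)"
    unfolding u N_def by (rule tsum_bch_diff[OF S])
  finally have "tsum (map (\<lambda>x. tlog m (tmult (tinv (texp u)) x)) (map texp zs)) = tzero \<longleftrightarrow>
      (\<forall>a. S1 a = N * u1 a) \<and> (\<forall>a b. S2 a b - N * U a b + (S1 a * u1 b - u1 a * S1 b) / 2 = 0)"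
    by (simp add: tzero_def fun_eq_iff)
  also have "\<dots> \<longleftrightarrow> (\<forall>a. u1 a = S1 a / N) \<and> (\<forall>a b. U a b = S2 a b / N)"
  proof -
    have level1: "S1 a = N * u1 a \<longleftrightarrow> u1 a = S1 a / N" for a
      using \<open>N > 0\<close> by (auto simp: field_simps)
    have "S2 a b - N * U a b = 0 \<longleftrightarrow> U a b = S2 a b / N" for a b
      using \<open>N > 0\<close> by (auto simp: field_simps)
    \<comment> \<open>at the mean, the bracket of the mean with itself vanishes\<close>
    moreover have "S1 a * u1 b - u1 a * S1 b = 0" if "\<forall>a. u1 a = S1 a / N" for a b
      using that by simp
    ultimately show ?thesis using level1 by auto
  qed
  finally show ?thesis by (simp add: u mean fun_eq_iff)
qed

lemma bary_texp:
  assumes zs: "set zs \<subseteq> g2 m" and "zs \<noteq> []"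
  shows "bary m (map texp zs) = texp (tmean zs)"
  unfolding bary_def
proof (rule the_equality)
  show "texp (tmean zs) \<in> G2 m \<and>
    tsum (map (\<lambda>x. tlog m (tmult (tinv (texp (tmean zs))) x)) (map texp zs)) = tzero"
    using tsum_tlog_eq_tzero_iff[OF assms tmean_g2[OF zs]] tmean_g2[OF zs] unfolding G2_def by blast
next
  fix y assume "y \<in> G2 m \<and> tsum (map (\<lambda>x. tlog m (tmult (tinv y) x)) (map texp zs)) = tzero"
  then show "y = texp (tmean zs)" using tsum_tlog_eq_tzero_iff[OF assms] unfolding G2_def by blast
qed

section \<open>Areas of rectangles and triangles\<close>

lemma negligible_line:
  assumes "(a, b) \<noteq> (0, 0)"
  shows "negligible {x :: real \<times> real. a * fst x + b * snd x = c}"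
proof -
  have "{x :: real \<times> real. a * fst x + b * snd x = c} = {x. (a, b) \<bullet> x = c}"
    by (auto simp: inner_prod_def)
  then show ?thesis using negligible_hyperplane[of "(a, b)" c] assms by (simp add: zero_prod_def)
qed

lemma has_integral_rectangle:
  assumes "a \<le> b" "c \<le> d"
  shows "((\<lambda>_. 1::real) has_integral (b - a) * (d - c))
           {x :: real \<times> real. a < fst x \<and> fst x < b \<and> c < snd x \<and> snd x < d}"
proof -
  have "{x :: real \<times> real. a < fst x \<and> fst x < b \<and> c < snd x \<and> snd x < d} = box (a, c) (b, d)"
    by (auto simp: mem_box Basis_prod_def)
  moreover have "Henstock_Kurzweil_Integration.content (cbox (a, c) (b, d)) = (b - a) * (d - c)"
    using assms by (simp add: content_Pair)
  ultimately show ?thesis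
    using has_integral_const[of "1::real" "(a, c)" "(b, d)"] by (simp add: has_integral_open_interval)
qed

lemma has_integral_swap:
  fixes f :: "'a::euclidean_space \<times> 'b::euclidean_space \<Rightarrow> 'c::real_normed_vector"
  assumes "(f has_integral I) (cbox (a, c) (b, d))"
  shows "((\<lambda>x. f (prod.swap x)) has_integral I) (cbox (c, a) (d, b))"
proof -
  have "((\<lambda>x. f (prod.swap x)) has_integral (1 / 1) *\<^sub>R I) (prod.swap ` cbox (a, c) (b, d))"
  proof (rule has_integral_twiddle[where g = prod.swap and h = prod.swap])
    show "Henstock_Kurzweil_Integration.content (prod.swap ` cbox u v) =
        1 * Henstock_Kurzweil_Integration.content (cbox u v)" for u v :: "'b \<times> 'a"
      by (metis content_Pair mult.commute mult_1 old.prod.exhaust swap_cbox_Pair)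
    show "\<exists>w z. prod.swap ` cbox u v = cbox w z" for u v :: "'a \<times> 'b"
      by (cases u, cases v) (metis swap_cbox_Pair)
    show "\<exists>w z. prod.swap ` cbox u v = cbox w z" for u v :: "'b \<times> 'a"
      by (cases u, cases v) (metis swap_cbox_Pair)
  qed (use assms isCont_swap in simp_all)
  then show ?thesis by (simp add: swap_cbox_Pair)
qed

(* The triangle and its mirror image under swapping the coordinates tile the square. *)
lemma has_integral_triangle:
  assumes "l \<le> h"
  shows "((\<lambda>_. 1::real) has_integral (h - l)\<^sup>2 / 2)
           {x :: real \<times> real. l < fst x \<and> fst x < snd x \<and> snd x < h}"
proof -
  define T where "T = {x :: real \<times> real. l < fst x \<and> fst x < snd x \<and> snd x < h}"
  define C where "C = cbox (l, l) (h, h)"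
  have "T \<subseteq> C" unfolding T_def C_def by (auto simp: cbox_Pair_eq)
  have "T = {x. l < fst x} \<inter> {x. fst x < snd x} \<inter> {x. snd x < h}" unfolding T_def by auto
  moreover have "open ({x :: real \<times> real. l < fst x} \<inter> {x. fst x < snd x} \<inter> {x. snd x < h})"
    by (intro open_Int open_Collect_less continuous_intros)
  ultimately have "open T" by simp
  moreover have "bounded T" using \<open>T \<subseteq> C\<close> unfolding C_def by (meson bounded_cbox bounded_subset)
  ultimately have "T \<in> lmeasurable" by (rule lmeasurable_open[rotated])
  then obtain I where I: "((\<lambda>_. 1::real) has_integral I) T"
    using lmeasurable_iff_integrable_on by (auto simp: integrable_on_def)
  define f where "f x = (if x \<in> T then 1::real else 0)" for x
  have f: "(f has_integral I) C" unfolding f_def using I \<open>T \<subseteq> C\<close> by simp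
  have f_swap: "((\<lambda>x. f (prod.swap x)) has_integral I) C"
    using has_integral_swap[OF f[unfolded C_def]] by (simp add: C_def)
  define N where "N = {x :: real \<times> real. fst x = snd x} \<union> {x. fst x = l} \<union> {x. fst x = h}
    \<union> {x. snd x = l} \<union> {x. snd x = h}"
  have "negligible N"
    using negligible_line[of 1 "-1" 0] negligible_line[of 1 0] negligible_line[of 0 1]
    by (simp add: N_def)
  then have "((\<lambda>x. f x + f (prod.swap x)) has_integral
      Henstock_Kurzweil_Integration.content C *\<^sub>R 1) C"
  proof (rule has_integral_spike)
    show "((\<lambda>_. 1) has_integral Henstock_Kurzweil_Integration.content C *\<^sub>R 1) C"
      unfolding C_def by (rule has_integral_const)
    fix x assume "x \<in> C - N"
    then show "f x + f (prod.swap x) = 1"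
      unfolding f_def T_def C_def N_def by (cases x) (auto simp: cbox_Pair_eq)
  qed
  moreover have "Henstock_Kurzweil_Integration.content C = (h - l)\<^sup>2"
    unfolding C_def using assms by (simp add: content_Pair power2_eq_square)
  ultimately have "I + I = (h - l)\<^sup>2"
    using has_integral_unique[OF has_integral_add[OF f f_swap]] by simp
  then have "(h - l)\<^sup>2 / 2 = I" by simp
  with I show ?thesis by (simp only: T_def)
qed

section \<open>Signatures of axis paths\<close>

(* Since concatenation nests to the right, axis_concat js traverses its p-th segment at constant
   speed during the interval (seg_start p, seg_end (length js) p). *)

definition seg_start :: "nat \<Rightarrow> real" where
  "seg_start p = 1 - 1 / 2 ^ p"

definition seg_end :: "nat \<Rightarrow> nat \<Rightarrow> real" where
  "seg_end k p = (if Suc p = k then 1 else seg_start (Suc p))"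

definition axis_speed :: "nat list \<Rightarrow> nat \<Rightarrow> real \<Rightarrow> real" where
  "axis_speed js a t = (\<Sum>p<length js.
     if js ! p = a \<and> seg_start p < t \<and> t < seg_end (length js) p
     then 1 / (seg_end (length js) p - seg_start p) else 0)"

lemma seg_start_0 [simp]: "seg_start 0 = 0"
  by (simp add: seg_start_def)

lemma seg_start_Suc: "seg_start (Suc p) = (1 + seg_start p) / 2"
  by (simp add: seg_start_def field_simps)

lemma seg_end_Suc: "seg_end (Suc k) (Suc p) = (1 + seg_end k p) / 2"
  by (simp add: seg_end_def seg_start_Suc)

lemma seg_start_nonneg: "0 \<le> seg_start p"
  by (simp add: seg_start_def)

lemma seg_start_less: "p < q \<Longrightarrow> seg_start p < seg_start q"
  by (simp add: seg_start_def field_simps)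

lemma seg_start_less_seg_end: "p < k \<Longrightarrow> seg_start p < seg_end k p"
  using seg_start_less[of p "Suc p"] by (auto simp: seg_end_def seg_start_def)

lemma seg_end_le_1: "seg_end k p \<le> 1"
  by (simp add: seg_end_def seg_start_def)

lemma seg_end_le_seg_start: "p < q \<Longrightarrow> q < k \<Longrightarrow> seg_end k p \<le> seg_start q"
  using seg_start_less[of "Suc p" q] by (cases "Suc p = q") (auto simp: seg_end_def)

lemma axis_speed_nonpos:
  assumes "t \<le> 0"
  shows "axis_speed js a t = 0"
  unfolding axis_speed_def
proof (intro sum.neutral ballI)
  fix p
  have "\<not> seg_start p < t" using seg_start_nonneg[of p] assms by linarith
  then show "(if js ! p = a \<and> seg_start p < t \<and> t < seg_end (length js) p
     then 1 / (seg_end (length js) p - seg_start p) else 0) = 0" by simp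
qed

lemma axis_speed_single: "axis_speed [j] a t = (if j = a \<and> 0 < t \<and> t < 1 then 1 else 0)"
proof -
  have "{..<length [j]} = {0}" by auto
  then show ?thesis unfolding axis_speed_def by (simp only:) (simp add: seg_end_def)
qed

lemma axis_speed_Cons:
  assumes "js \<noteq> []"
  shows "axis_speed (j # js) a t =
    (if j = a \<and> 0 < t \<and> t < 1/2 then 2 else 0) + 2 * axis_speed js a (2 * t - 1)"
proof -
  obtain k where k: "length js = Suc k" using assms by (cases js) auto
  have first: "seg_end (Suc (Suc k)) 0 = 1/2"
    by (simp add: seg_end_def seg_start_def)
  have shifted: "(if (j # js) ! Suc p = a \<and> seg_start (Suc p) < t \<and> t < seg_end (Suc (Suc k)) (Suc p)
        then 1 / (seg_end (Suc (Suc k)) (Suc p) - seg_start (Suc p)) else 0) =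
      2 * (if js ! p = a \<and> seg_start p < 2 * t - 1 \<and> 2 * t - 1 < seg_end (Suc k) p
        then 1 / (seg_end (Suc k) p - seg_start p) else 0)" for p
    unfolding seg_start_Suc seg_end_Suc by (auto simp: field_simps)
  show ?thesis
    unfolding axis_speed_def length_Cons k sum.lessThan_Suc_shift shifted first
    by (simp add: sum_distrib_left)
qed

lemma Epath_has_derivative:
  "((\<lambda>s. Epath j (c * s) a) has_real_derivative (if j = a then c else 0)) (at t)"
  by (cases "j = a") (auto simp: Epath_def intro!: derivative_eq_intros)

lemma axis_concat_0: "axis_concat js 0 = (\<lambda>_. 0)"
  by (induction js rule: axis_concat.induct) (auto simp: Epath_def pconcat_def)

lemma axis_concat_1: "axis_concat js 1 a = (\<Sum>p<length js. if js ! p = a then 1 else 0)"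
proof (induction js rule: axis_concat.induct)
  case (3 j v va)
  have "axis_concat (j # v # va) 1 a = Epath j 1 a + axis_concat (v # va) 1 a"
    by (simp add: pconcat_def)
  then show ?case
    unfolding 3 by (simp only: length_Cons sum.lessThan_Suc_shift) (simp add: Epath_def)
qed (simp_all add: Epath_def)

lemma axis_concat_Cons:
  "js \<noteq> [] \<Longrightarrow> (\<lambda>s. axis_concat (j # js) s a) =
    (\<lambda>s. if s < 1/2 then Epath j (2 * s) a else Epath j 1 a + axis_concat js (2 * s - 1) a)"
  by (cases js) (auto simp: pconcat_def fun_eq_iff)

lemma axis_concat_has_derivative:
  assumes "js \<noteq> []" "0 < t" "t < 1" "\<forall>p<length js. t \<noteq> seg_start p"
  shows "((\<lambda>s. axis_concat js s a) has_real_derivative axis_speed js a t) (at t)"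
  using assms
proof (induction js arbitrary: t rule: axis_concat.induct)
  case (2 j)
  then show ?case
    using Epath_has_derivative[of j 1 a t] by (simp add: axis_speed_single)
next
  case (3 j v va)
  let ?Y = "axis_concat (v # va)"
  have path: "(\<lambda>s. axis_concat (j # v # va) s a) =
      (\<lambda>s. if s < 1/2 then Epath j (2 * s) a else Epath j 1 a + ?Y (2 * s - 1) a)"
    by (rule axis_concat_Cons) simp
  have speed: "axis_speed (j # v # va) a t =
      (if j = a \<and> t < 1/2 then 2 else 0) + 2 * axis_speed (v # va) a (2 * t - 1)"
    using axis_speed_Cons[of "v # va" j a t] "3.prems"(2) by simp
  have "t \<noteq> seg_start 1" using "3.prems"(4) by auto
  then consider "t < 1/2" | "1/2 < t" by (fastforce simp: seg_start_def)
  then show ?case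
  proof cases
    case 1
    then have "((\<lambda>s. axis_concat (j # v # va) s a) has_real_derivative (if j = a then 2 else 0)) (at t)"
      using has_field_derivative_transform_within_open[OF Epath_has_derivative, of "{..<1/2}"]
      unfolding path by auto
    then show ?thesis using 1 by (simp add: speed axis_speed_nonpos)
  next
    case 2
    have Y: "((\<lambda>s. ?Y s a) has_real_derivative axis_speed (v # va) a (2 * t - 1)) (at (2 * t - 1))"
    proof (rule "3.IH")
      show "\<forall>p<length (v # va). 2 * t - 1 \<noteq> seg_start p"
        using "3.prems"(4) by (auto simp: seg_start_Suc)
    qed (use 2 "3.prems" in auto)
    have "((\<lambda>s. 2 * s - 1) has_real_derivative 2) (at t)"
      by (auto intro!: derivative_eq_intros)
    from DERIV_chain2[OF Y this]
    have right: "((\<lambda>s. Epath j 1 a + ?Y (2 * s - 1) a) has_real_derivative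
        axis_speed (v # va) a (2 * t - 1) * 2) (at t)"
      by (auto intro!: derivative_eq_intros)
    have "((\<lambda>s. axis_concat (j # v # va) s a) has_real_derivative
        axis_speed (v # va) a (2 * t - 1) * 2) (at t)"
      using has_field_derivative_transform_within_open[OF right, of "{1/2<..}"] 2
      unfolding path by auto
    then show ?thesis using 2 by (simp add: speed mult.commute)
  qed
qed simp

definition unit_triangle :: "(real \<times> real) set" where
  "unit_triangle = {x. 0 < fst x \<and> fst x < snd x \<and> snd x < 1}"

definition order_weight :: "nat \<Rightarrow> nat \<Rightarrow> real" where
  "order_weight p q = (if p < q then 1 else if p = q then 1/2 else 0)"

lemma has_integral_segment_pair:
  assumes "p < k" "q < k"
  shows "((\<lambda>x. if seg_start p < fst x \<and> fst x < seg_end k p \<and> seg_start q < snd x \<and> snd x < seg_end k q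
              then 1 / (seg_end k p - seg_start p) * (1 / (seg_end k q - seg_start q)) else 0)
          has_integral order_weight p q) unit_triangle"
proof -
  define R where "R = {x :: real \<times> real. seg_start p < fst x \<and> fst x < seg_end k p \<and>
    seg_start q < snd x \<and> snd x < seg_end k q}"
  define c where "c = 1 / (seg_end k p - seg_start p) * (1 / (seg_end k q - seg_start q))"
  have lens: "seg_start p < seg_end k p" "seg_start q < seg_end k q"
    using seg_start_less_seg_end assms by auto
  consider "p < q" | "p = q" | "q < p" by linarith
  then have "((\<lambda>_. c) has_integral order_weight p q) (R \<inter> unit_triangle)"
  proof cases
    case 1
    have "R \<inter> unit_triangle = R"
      using seg_end_le_seg_start[OF 1 assms(2)] seg_start_nonneg[of p] seg_end_le_1[of k q]
      by (auto simp: R_def unit_triangle_def)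
    moreover have "((\<lambda>_. c * 1) has_integral c * ((seg_end k p - seg_start p) * (seg_end k q - seg_start q))) R"
      unfolding R_def using lens by (intro has_integral_mult_right has_integral_rectangle) auto
    ultimately show ?thesis using 1 lens by (simp add: c_def order_weight_def)
  next
    case 2
    have "R \<inter> unit_triangle = {x. seg_start p < fst x \<and> fst x < snd x \<and> snd x < seg_end k p}"
      using seg_start_nonneg[of p] seg_end_le_1[of k p] by (auto simp: R_def unit_triangle_def 2)
    moreover have "((\<lambda>_. c * 1) has_integral c * ((seg_end k p - seg_start p)\<^sup>2 / 2))
        {x. seg_start p < fst x \<and> fst x < snd x \<and> snd x < seg_end k p}"
      using lens by (intro has_integral_mult_right has_integral_triangle) auto
    ultimately show ?thesis using 2 lens by (simp add: c_def order_weight_def power2_eq_square)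
  next
    case 3
    have "R \<inter> unit_triangle = {}"
      using seg_end_le_seg_start[OF 3 assms(1)] by (auto simp: R_def unit_triangle_def)
    then show ?thesis using 3 by (simp add: order_weight_def)
  qed
  then have "((\<lambda>x. if x \<in> R then c else 0) has_integral order_weight p q) unit_triangle"
    by (simp add: has_integral_restrict_Int)
  then show ?thesis unfolding R_def c_def mem_Collect_eq .
qed

lemma integral_axis_speeds:
  assumes "js \<noteq> []"
  shows "integral unit_triangle
      (\<lambda>x. deriv (\<lambda>t. axis_concat js t a) (fst x) * deriv (\<lambda>t. axis_concat js t b) (snd x))
    = (\<Sum>p<length js. \<Sum>q<length js. if js ! p = a \<and> js ! q = b then order_weight p q else 0)"
proof -
  define k where "k = length js"
  define N where "N = (\<Union>p<k. {x :: real \<times> real. fst x = seg_start p} \<union> {x. snd x = seg_start p})"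
  define G where "G p q x = (if js ! p = a \<and> js ! q = b then
      (if seg_start p < fst x \<and> fst x < seg_end k p \<and> seg_start q < snd x \<and> snd x < seg_end k q
       then 1 / (seg_end k p - seg_start p) * (1 / (seg_end k q - seg_start q)) else 0) else 0)"
    for p q and x :: "real \<times> real"
  have "negligible N"
    unfolding N_def using negligible_line[of 1 0] negligible_line[of 0 1]
    by (intro negligible_Union) auto
  have deriv: "deriv (\<lambda>t. axis_concat js t c) s = axis_speed js c s"
    if "0 < s" "s < 1" "\<forall>p<k. s \<noteq> seg_start p" for c s
    using that assms by (intro DERIV_imp_deriv axis_concat_has_derivative) (auto simp: k_def)
  have "integral unit_triangle
      (\<lambda>x. deriv (\<lambda>t. axis_concat js t a) (fst x) * deriv (\<lambda>t. axis_concat js t b) (snd x))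
    = integral unit_triangle (\<lambda>x. \<Sum>p<k. \<Sum>q<k. G p q x)"
  proof (rule integral_spike[OF \<open>negligible N\<close>])
    fix x assume "x \<in> unit_triangle - N"
    then have "deriv (\<lambda>t. axis_concat js t a) (fst x) * deriv (\<lambda>t. axis_concat js t b) (snd x) =
        axis_speed js a (fst x) * axis_speed js b (snd x)"
      by (subst (1 2) deriv) (auto simp: unit_triangle_def N_def)
    also have "\<dots> = (\<Sum>p<k. \<Sum>q<k. G p q x)"
      unfolding axis_speed_def k_def[symmetric] sum_product G_def by (intro sum.cong refl) auto
    finally show "(\<Sum>p<k. \<Sum>q<k. G p q x) =
        deriv (\<lambda>t. axis_concat js t a) (fst x) * deriv (\<lambda>t. axis_concat js t b) (snd x)" ..
  qed
  also have "\<dots> = (\<Sum>p<k. \<Sum>q<k. if js ! p = a \<and> js ! q = b then order_weight p q else 0)"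
  proof (rule integral_unique, intro has_integral_sum finite_lessThan)
    fix p q assume "p \<in> {..<k}" "q \<in> {..<k}"
    then show "(G p q has_integral (if js ! p = a \<and> js ! q = b then order_weight p q else 0)) unit_triangle"
      unfolding G_def using has_integral_segment_pair[of p k q] by auto
  qed
  finally show ?thesis unfolding k_def .
qed

definition order_sign :: "nat \<Rightarrow> nat \<Rightarrow> real" where
  "order_sign a b = (if a < b then 1 else if a = b then 0 else -1)"

lemma order_sign_add: "order_sign (d + p) (d + q) = order_sign p q"
  by (simp add: order_sign_def)

lemma order_sign_Suc: "order_sign (Suc p) (Suc q) = order_sign p q"
  by (simp add: order_sign_def)

definition in_block :: "nat \<Rightarrow> nat \<Rightarrow> nat \<Rightarrow> bool" where
  "in_block s n a \<longleftrightarrow> s < a \<and> a \<le> s + n"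

definition block_log :: "nat \<Rightarrow> nat \<Rightarrow> tens2" where
  "block_log s n = (0, \<lambda>a. if in_block s n a then 1 else 0,
     \<lambda>a b. if in_block s n a \<and> in_block s n b then order_sign a b / 2 else 0)"

lemma sum_in_block:
  "(\<Sum>p<n. if s + 1 + p = a then f p else 0) = (if in_block s n a then f (a - s - 1) else (0::real))"
proof (cases "in_block s n a")
  case True
  then have "(\<Sum>p<n. if s + 1 + p = a then f p else 0) = (\<Sum>p<n. if p = a - s - 1 then f p else 0)"
    unfolding in_block_def by (intro sum.cong) auto
  moreover have "a - s - 1 < n" using True unfolding in_block_def by linarith
  ultimately show ?thesis using True by simp
next
  case False
  then show ?thesis unfolding in_block_def by (intro trans[OF sum.neutral]) auto
qed

lemma sig2_block_path:
  assumes "0 < n"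
  shows "sig2 (axis_concat [s + 1 ..< s + n + 1]) = texp (block_log s n)"
proof -
  let ?js = "[s + 1 ..< s + n + 1]"
  have nth: "p < n \<Longrightarrow> ?js ! p = s + 1 + p" for p by (subst nth_upt) auto
  have incr: "axis_concat ?js 1 a - axis_concat ?js 0 a = (if in_block s n a then 1 else 0)" for a
  proof -
    have "axis_concat ?js 1 a = (\<Sum>p<n. if s + 1 + p = a then 1 else 0)"
      unfolding axis_concat_1 by (intro sum.cong) (simp_all del: upt_Suc add: nth)
    then show ?thesis unfolding axis_concat_0 sum_in_block by simp
  qed
  have area: "integral unit_triangle
      (\<lambda>x. deriv (\<lambda>t. axis_concat ?js t a) (fst x) * deriv (\<lambda>t. axis_concat ?js t b) (snd x))
      = (if in_block s n a \<and> in_block s n b then order_sign a b / 2 + 1 / 2 else 0)" for a b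
  proof -
    have "integral unit_triangle
      (\<lambda>x. deriv (\<lambda>t. axis_concat ?js t a) (fst x) * deriv (\<lambda>t. axis_concat ?js t b) (snd x))
      = (\<Sum>p<n. if s + 1 + p = a then (\<Sum>q<n. if s + 1 + q = b then order_weight p q else 0) else 0)"
      using assms by (subst integral_axis_speeds) (auto simp del: upt_Suc simp: nth intro!: sum.cong)
    also have "\<dots> = (if in_block s n a \<and> in_block s n b then order_weight (a - s - 1) (b - s - 1) else 0)"
      unfolding sum_in_block by simp
    also have "\<dots> = (if in_block s n a \<and> in_block s n b then order_sign a b / 2 + 1 / 2 else 0)"
      by (auto simp: in_block_def order_weight_def order_sign_def)
    finally show ?thesis .
  qed
  show ?thesis
    unfolding sig2_def block_log_def texp_lie incr unit_triangle_def[symmetric] area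
    by (auto simp: fun_eq_iff)
qed

section \<open>Blocks of a composition\<close>

definition block_start :: "nat list \<Rightarrow> nat \<Rightarrow> nat" where
  "block_start \<alpha> t = sum_list (take t \<alpha>)"

fun block_of :: "nat list \<Rightarrow> nat \<Rightarrow> nat" where
  "block_of [] i = 0"
| "block_of (x # xs) i = (if i < x then 0 else Suc (block_of xs (i - x)))"

lemma block_of_iff:
  "i < sum_list \<alpha> \<Longrightarrow> t < length \<alpha> \<Longrightarrow>
   block_of \<alpha> i = t \<longleftrightarrow> block_start \<alpha> t \<le> i \<and> i < block_start \<alpha> t + \<alpha> ! t"
proof (induction \<alpha> arbitrary: i t)
  case (Cons x xs)
  show ?case
  proof (cases t)
    case (Suc t')
    with Cons show ?thesis by (cases "i < x") (auto simp: block_start_def)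
  qed (auto simp: block_start_def)
qed simp

lemma block_of_less: "i < sum_list \<alpha> \<Longrightarrow> block_of \<alpha> i < length \<alpha>"
  by (induction \<alpha> arbitrary: i) auto

lemma block_start_add_le: "t < length \<alpha> \<Longrightarrow> block_start \<alpha> t + \<alpha> ! t \<le> sum_list \<alpha>"
proof (induction \<alpha> arbitrary: t)
  case (Cons x xs)
  then show ?case by (cases t) (auto simp: block_start_def)
qed simp

lemma block_of_block_start_add:
  assumes "t < length \<alpha>" "q < \<alpha> ! t"
  shows "block_of \<alpha> (block_start \<alpha> t + q) = t" and "block_start \<alpha> t + q < sum_list \<alpha>"
proof -
  show "block_start \<alpha> t + q < sum_list \<alpha>" using block_start_add_le[OF assms(1)] assms(2) by simp
  then show "block_of \<alpha> (block_start \<alpha> t + q) = t" using block_of_iff assms by simp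
qed

lemma block_decomp:
  assumes "i < sum_list \<alpha>"
  obtains t q where "t < length \<alpha>" "q < \<alpha> ! t" "i = block_start \<alpha> t + q"
proof -
  let ?t = "block_of \<alpha> i"
  have "?t < length \<alpha>" using block_of_less[OF assms] .
  moreover from this have "block_start \<alpha> ?t \<le> i \<and> i < block_start \<alpha> ?t + \<alpha> ! ?t"
    using block_of_iff assms by blast
  ultimately show ?thesis using that[of ?t "i - block_start \<alpha> ?t"] by auto
qed

lemma sum_blocks:
  "(\<Sum>j<sum_list \<alpha>. g j) = (\<Sum>t<length \<alpha>. \<Sum>q<\<alpha> ! t. g (block_start \<alpha> t + q) :: real)"
proof (induction \<alpha> arbitrary: g)
  case (Cons x xs)
  have "(\<Sum>j<x + n. g j) = (\<Sum>j<x. g j) + (\<Sum>j<n. g (x + j))" for n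
    by (induction n) auto
  then show ?case
    using Cons.IH[of "\<lambda>j. g (x + j)"]
    by (simp only: sum_list.Cons length_Cons sum.lessThan_Suc_shift) (simp add: block_start_def add.assoc)
qed simp

lemma sum_same_block:
  assumes "t < length \<alpha>"
  shows "(\<Sum>j<sum_list \<alpha>. if block_of \<alpha> j = t then f j else 0) =
    (\<Sum>q<\<alpha> ! t. f (block_start \<alpha> t + q) :: real)"
proof -
  have "(\<Sum>j<sum_list \<alpha>. if block_of \<alpha> j = t then f j else 0) =
      (\<Sum>t'<length \<alpha>. if t' = t then (\<Sum>q<\<alpha> ! t. f (block_start \<alpha> t + q)) else 0)"
    unfolding sum_blocks
  proof (intro sum.cong refl)
    fix t' assume "t' \<in> {..<length \<alpha>}"
    then show "(\<Sum>q<\<alpha> ! t'. if block_of \<alpha> (block_start \<alpha> t' + q) = t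
        then f (block_start \<alpha> t' + q) else 0) =
      (if t' = t then (\<Sum>q<\<alpha> ! t. f (block_start \<alpha> t + q)) else 0)"
      using block_of_block_start_add(1)[of t' \<alpha>] by (auto intro: sum.neutral)
  qed
  then show ?thesis using assms by simp
qed

lemma sum_order_sign:
  assumes "p < k"
  shows "(\<Sum>q<k. order_sign p q * f q) = (\<Sum>q<k. f q) - (\<Sum>q<Suc p. f q) - (\<Sum>q<p. f q :: real)"
proof -
  have "(\<Sum>q<k. order_sign p q * f q) =
      (\<Sum>q<k. f q - (if q < Suc p then f q else 0) - (if q < p then f q else 0))"
    unfolding order_sign_def by (intro sum.cong) auto
  also have "\<dots> = (\<Sum>q<k. f q) - (\<Sum>q<k. if q < Suc p then f q else 0)
      - (\<Sum>q<k. if q < p then f q else 0)"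
    by (simp add: sum_subtractf)
  also have "(\<Sum>q<k. if q < Suc p then f q else 0) = (\<Sum>q<Suc p. f q)"
    using assms by (subst sum.mono_neutral_right[of "{..<k}" "{..<Suc p}"]) auto
  also have "(\<Sum>q<k. if q < p then f q else 0) = (\<Sum>q<p. f q)"
    using assms by (subst sum.mono_neutral_right[of "{..<k}" "{..<p}"]) auto
  finally show ?thesis .
qed

lemma sum_alternating:
  assumes "\<And>q. q < k \<Longrightarrow> y q = (-1) ^ q * y 0" and "n \<le> k"
  shows "(\<Sum>q<n. y q) = (if odd n then y 0 else (0::real))"
proof -
  have "(\<Sum>q<n. y q) = (\<Sum>q<n. (-1) ^ q * y 0)"
  proof (rule sum.cong[OF refl])
    fix q assume "q \<in> {..<n}"
    then have "q < k" using assms(2) by simp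
    then show "y q = (-1) ^ q * y 0" by (rule assms(1))
  qed
  also have "\<dots> = (\<Sum>q<n. (-1) ^ q) * y 0"
    by (simp add: sum_distrib_right)
  also have "(\<Sum>q<n. (-1::real) ^ q) = (if odd n then 1 else 0)"
    by (induction n) auto
  finally show ?thesis by simp
qed

lemma skew_system_iff:
  assumes "0 < k"
  shows "(\<forall>p<k. (\<Sum>q<k. order_sign p q * y q) + c = 0) \<longleftrightarrow>
    (\<forall>q<k. y q = (-1) ^ q * y 0) \<and> c = (if even k then y 0 else 0)"
proof
  assume eqs: "\<forall>p<k. (\<Sum>q<k. order_sign p q * y q) + c = 0"
  \<comment> \<open>consecutive equations differ by y p + y (Suc p)\<close>
  have step: "y (Suc p) = - y p" if "Suc p < k" for p
  proof -
    have "(\<Sum>q<k. order_sign p q * y q) + c = 0" "(\<Sum>q<k. order_sign (Suc p) q * y q) + c = 0"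
      using eqs that by simp_all
    then have "(\<Sum>q<k. order_sign p q * y q) = (\<Sum>q<k. order_sign (Suc p) q * y q)"
      by linarith
    then show ?thesis
      unfolding sum_order_sign[OF that] sum_order_sign[OF Suc_lessD[OF that]] by simp
  qed
  have alternating: "\<forall>q<k. y q = (-1) ^ q * y 0"
  proof (intro allI impI)
    fix q show "q < k \<Longrightarrow> y q = (-1) ^ q * y 0"
      by (induction q) (use step in auto)
  qed
  have "(\<Sum>q<k. y q) - y 0 + c = 0"
    using eqs[rule_format, OF assms] sum_order_sign[OF assms, of y] by simp
  moreover have "(\<Sum>q<k. y q) = (if odd k then y 0 else 0)"
    using sum_alternating[of k y k] alternating by blast
  ultimately have "c = (if even k then y 0 else 0)" by auto
  with alternating show "(\<forall>q<k. y q = (-1) ^ q * y 0) \<and> c = (if even k then y 0 else 0)" ..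
next
  assume "(\<forall>q<k. y q = (-1) ^ q * y 0) \<and> c = (if even k then y 0 else 0)"
  then have alternating: "\<And>q. q < k \<Longrightarrow> y q = (-1) ^ q * y 0" and c: "c = (if even k then y 0 else 0)"
    by blast+
  show "\<forall>p<k. (\<Sum>q<k. order_sign p q * y q) + c = 0"
  proof (intro allI impI)
    fix p assume "p < k"
    have "(\<Sum>q<k. y q) = (if odd k then y 0 else 0)"
      using sum_alternating[OF alternating, of k] by simp
    moreover have "(\<Sum>q<Suc p. y q) = (if odd (Suc p) then y 0 else 0)"
      using \<open>p < k\<close> by (intro sum_alternating[OF alternating]) auto
    moreover have "(\<Sum>q<p. y q) = (if odd p then y 0 else 0)"
      using \<open>p < k\<close> by (intro sum_alternating[OF alternating]) auto
    ultimately show "(\<Sum>q<k. order_sign p q * y q) + c = 0"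
      unfolding sum_order_sign[OF \<open>p < k\<close>] c by auto
  qed
qed

definition alternating_on_blocks :: "nat list \<Rightarrow> (nat \<Rightarrow> real) \<Rightarrow> bool" where
  "alternating_on_blocks \<alpha> f \<longleftrightarrow>
     (\<forall>t<length \<alpha>. \<forall>q<\<alpha> ! t. f (block_start \<alpha> t + q) = (-1) ^ q * f (block_start \<alpha> t))"

lemma sum_alternating_on_blocks:
  assumes "alternating_on_blocks \<alpha> f"
  shows "(\<Sum>j<sum_list \<alpha>. f j) = (\<Sum>t<length \<alpha>. if odd (\<alpha> ! t) then f (block_start \<alpha> t) else 0)"
  unfolding sum_blocks
proof (rule sum.cong[OF refl])
  fix t assume "t \<in> {..<length \<alpha>}"
  then show "(\<Sum>q<\<alpha> ! t. f (block_start \<alpha> t + q)) = (if odd (\<alpha> ! t) then f (block_start \<alpha> t) else 0)"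
    using assms sum_alternating[of "\<alpha> ! t" "\<lambda>q. f (block_start \<alpha> t + q)" "\<alpha> ! t"]
    by (simp add: alternating_on_blocks_def)
qed

lemma alternating_on_blocks_eq_0:
  assumes "alternating_on_blocks \<alpha> f" "\<And>t. t < length \<alpha> \<Longrightarrow> f (block_start \<alpha> t) = 0"
    and "i < sum_list \<alpha>"
  shows "f i = 0"
proof -
  obtain t q where "t < length \<alpha>" "q < \<alpha> ! t" "i = block_start \<alpha> t + q"
    using block_decomp[OF assms(3)] .
  then show ?thesis using assms(1,2) unfolding alternating_on_blocks_def by simp
qed

definition block_last :: "nat list \<Rightarrow> nat \<Rightarrow> nat" where
  "block_last \<alpha> t = block_start \<alpha> t + (\<alpha> ! t - 1)"

lemma length_le_sum_list: "\<forall>x\<in>set xs. 0 < x \<Longrightarrow> length xs \<le> sum_list (xs :: nat list)"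
  by (induction xs) auto

section \<open>Rank via a basis of columns\<close>

definition select_cols :: "'a mat \<Rightarrow> nat list \<Rightarrow> 'a mat" where
  "select_cols A js = mat (dim_row A) (length js) (\<lambda>(r, c). A $$ (r, js ! c))"

lemma select_cols_carrier: "A \<in> carrier_mat n nc \<Longrightarrow> select_cols A js \<in> carrier_mat n (length js)"
  by (simp add: select_cols_def)

lemma col_select_cols: "c < length js \<Longrightarrow> col (select_cols A js) c = col A (js ! c)"
  by (auto simp: select_cols_def col_def intro!: eq_vecI)

lemma set_cols_select_cols:
  assumes A: "A \<in> carrier_mat n nc" and js: "set js \<subseteq> {..<nc}"
  shows "set (cols (select_cols A js)) \<subseteq> set (cols A)"
proof
  fix v assume "v \<in> set (cols (select_cols A js))"
  then obtain c where c: "c < length js" "v = col (select_cols A js) c"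
    using select_cols_carrier[OF A] by (metis cols_length cols_nth in_set_conv_nth carrier_matD(2))
  then have "v = col A (js ! c)" by (simp add: col_select_cols)
  moreover have "js ! c < nc" using c(1) js nth_mem by fastforce
  ultimately show "v \<in> set (cols A)" using A by (metis cols_length cols_nth nth_mem carrier_matD(2))
qed

lemma mult_mat_vec_entry:
  assumes "A \<in> carrier_mat n nc" "x \<in> carrier_vec nc" "r < n"
  shows "(A *\<^sub>v x) $ r = (\<Sum>j<nc. A $$ (r, j) * x $ j)"
  using assms by (auto simp: scalar_prod_def atLeast0LessThan intro!: sum.cong)

lemma sum_set_distinct_nth: "distinct js \<Longrightarrow> (\<Sum>i\<in>set js. f i) = (\<Sum>c<length js. f (js ! c))"
  by (simp add: sum.distinct_set_conv_list sum_list_sum_nth atLeast0LessThan)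

lemma mult_vec_select_cols:
  fixes x :: "'a :: comm_semiring_0 vec"
  assumes A: "A \<in> carrier_mat n nc" and x: "x \<in> carrier_vec nc"
    and js: "distinct js" "set js \<subseteq> {..<nc}"
    and supp: "\<And>i. i < nc \<Longrightarrow> i \<notin> set js \<Longrightarrow> x $ i = 0"
  shows "A *\<^sub>v x = select_cols A js *\<^sub>v vec (length js) (\<lambda>c. x $ (js ! c))"
proof (rule eq_vecI)
  fix r assume "r < dim_vec (select_cols A js *\<^sub>v vec (length js) (\<lambda>c. x $ (js ! c)))"
  then have r: "r < n" using A by (simp add: select_cols_def)
  have "(A *\<^sub>v x) $ r = (\<Sum>i\<in>set js. A $$ (r, i) * x $ i)"
    unfolding mult_mat_vec_entry[OF A x r] using js supp by (intro sum.mono_neutral_right) auto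
  also have "\<dots> = (select_cols A js *\<^sub>v vec (length js) (\<lambda>c. x $ (js ! c))) $ r"
    using r A by (simp add: mult_mat_vec_entry[OF select_cols_carrier[OF A]] sum_set_distinct_nth[OF js(1)])
      (simp add: select_cols_def)
  finally show "(A *\<^sub>v x) $ r = (select_cols A js *\<^sub>v vec (length js) (\<lambda>c. x $ (js ! c))) $ r" .
qed (use A in \<open>simp add: select_cols_def\<close>)

lemma col_eq_mult_vec_of_kernel:
  fixes x :: "'a :: comm_ring_1 vec"
  assumes A: "A \<in> carrier_mat n nc" and x: "x \<in> carrier_vec nc" "A *\<^sub>v x = 0\<^sub>v n" "x $ j = 1"
    and j: "j < nc"
  shows "col A j = A *\<^sub>v vec nc (\<lambda>i. if i = j then 0 else - x $ i)" (is "_ = A *\<^sub>v ?x'")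
proof (rule eq_vecI)
  fix r assume "r < dim_vec (A *\<^sub>v ?x')"
  then have r: "r < n" using A by simp
  have "0 = (\<Sum>i<nc. A $$ (r, i) * x $ i)"
    using x(2) r mult_mat_vec_entry[OF A x(1) r] by simp
  also have "\<dots> = A $$ (r, j) - (\<Sum>i<nc. A $$ (r, i) * ?x' $ i)"
  proof -
    have "(\<Sum>i<nc. A $$ (r, i) * ?x' $ i) =
        (\<Sum>i<nc. (if i = j then A $$ (r, j) else 0) - A $$ (r, i) * x $ i)"
      using x(3) by (intro sum.cong) auto
    then show ?thesis using j by (simp add: sum_subtractf)
  qed
  finally show "col A j $ r = (A *\<^sub>v ?x') $ r"
    using j r A mult_mat_vec_entry[OF A _ r, of ?x'] by simp
qed (use j A in simp)

context vec_space
begin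

lemma rank_of_trivial_kernel:
  assumes B: "B \<in> carrier_mat n k" and ker: "\<And>y. y \<in> carrier_vec k \<Longrightarrow> B *\<^sub>v y = 0\<^sub>v n \<Longrightarrow> y = 0\<^sub>v k"
  shows "distinct (cols B)" and "rank B = k"
proof -
  show distB: "distinct (cols B)"
  proof (subst distinct_conv_nth, intro allI impI)
    fix c1 c2 assume c: "c1 < length (cols B)" "c2 < length (cols B)" "c1 \<noteq> c2"
    then have c': "c1 < k" "c2 < k" using B by auto
    show "cols B ! c1 \<noteq> cols B ! c2"
    proof
      assume eq: "cols B ! c1 = cols B ! c2"
      define y where "y = vec k (\<lambda>c. if c = c1 then 1 else if c = c2 then -1 else (0::'a))"
      have y: "y \<in> carrier_vec k" unfolding y_def by simp
      have "B *\<^sub>v y = 0\<^sub>v n"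
      proof (rule eq_vecI)
        fix r assume "r < dim_vec (0\<^sub>v n :: 'a vec)"
        then have r: "r < n" by simp
        have "B $$ (r, c1) = B $$ (r, c2)" using arg_cong[OF eq, of "\<lambda>v. v $ r"] c' B r by simp
        moreover have "(B *\<^sub>v y) $ r =
            (\<Sum>c<k. (if c = c1 then B $$ (r, c) else 0) - (if c = c2 then B $$ (r, c) else 0))"
          using c(3) unfolding mult_mat_vec_entry[OF B y r] by (intro sum.cong) (auto simp: y_def)
        ultimately show "(B *\<^sub>v y) $ r = 0\<^sub>v n $ r" using c' r by (simp add: sum_subtractf)
      qed (use B in simp)
      then have "y = 0\<^sub>v k" using ker y by blast
      then have "y $ c1 = 0" using c' by simp
      then show False unfolding y_def using c' by simp
    qed
  qed
  have "lin_indpt (set (cols B))"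
  proof
    assume "lin_dep (set (cols B))"
    then show False using lin_depE[OF B _ distB] ker by metis
  qed
  then show "rank B = k" using lin_indpt_full_rank[OF B distB] by simp
qed

lemma select_cols_trivial_kernel:
  fixes y :: "'a vec"
  assumes A: "A \<in> carrier_mat n nc" and js: "distinct js" "set js \<subseteq> {..<nc}"
    and ker: "\<And>x. x \<in> carrier_vec nc \<Longrightarrow> A *\<^sub>v x = 0\<^sub>v n \<Longrightarrow>
       (\<And>i. i < nc \<Longrightarrow> i \<notin> set js \<Longrightarrow> x $ i = 0) \<Longrightarrow> x = 0\<^sub>v nc"
    and y: "y \<in> carrier_vec (length js)" "select_cols A js *\<^sub>v y = 0\<^sub>v n"
  shows "y = 0\<^sub>v (length js)"
proof -
  define x where "x = vec nc (\<lambda>i. \<Sum>c<length js. if js ! c = i then y $ c else 0)"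
  have x: "x \<in> carrier_vec nc" by (simp add: x_def)
  have x_js: "x $ (js ! c) = y $ c" if "c < length js" for c
  proof -
    have "js ! c < nc" using that js(2) nth_mem by fastforce
    then have "x $ (js ! c) = (\<Sum>c'<length js. if c' = c then y $ c' else 0)"
      unfolding x_def using that js by (auto intro!: sum.cong simp: nth_eq_iff_index_eq)
    then show ?thesis using that by simp
  qed
  have x_off: "x $ i = 0" if "i < nc" "i \<notin> set js" for i
    unfolding x_def using that by (auto intro!: sum.neutral)
  have "vec (length js) (\<lambda>c. x $ (js ! c)) = y"
    using y(1) x_js by (auto intro!: eq_vecI)
  then have "A *\<^sub>v x = 0\<^sub>v n"
    using mult_vec_select_cols[OF A x js x_off] y(2) by simp
  then have "x = 0\<^sub>v nc" using ker[OF x] x_off by blast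
  show ?thesis
  proof (rule eq_vecI)
    fix c assume "c < dim_vec (0\<^sub>v (length js) :: 'a vec)"
    then have "c < length js" by simp
    then have "js ! c < nc" using js(2) nth_mem by fastforce
    have "y $ c = x $ (js ! c)" using x_js[OF \<open>c < length js\<close>] by simp
    also have "\<dots> = 0" using \<open>x = 0\<^sub>v nc\<close> \<open>js ! c < nc\<close> by simp
    finally show "y $ c = 0\<^sub>v (length js) $ c" using \<open>c < length js\<close> by simp
  qed (use y(1) in simp)
qed

lemma rank_select_cols_eq:
  assumes A: "A \<in> carrier_mat n nc" and js: "distinct js" "set js \<subseteq> {..<nc}"
    and distinct: "distinct (cols (select_cols A js))"
    and dep: "\<And>j. j < nc \<Longrightarrow> j \<notin> set js \<Longrightarrow> \<exists>x \<in> carrier_vec nc. A *\<^sub>v x = 0\<^sub>v n \<and>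
       x $ j = 1 \<and> (\<forall>i<nc. i \<notin> set js \<longrightarrow> i \<noteq> j \<longrightarrow> x $ i = 0)"
  shows "rank A = rank (select_cols A js)"
proof -
  define B where "B = select_cols A js"
  have B: "B \<in> carrier_mat n (length js)" unfolding B_def by (rule select_cols_carrier[OF A])
  have cols_carrier: "set (cols A) \<subseteq> carrier_vec n" "set (cols B) \<subseteq> carrier_vec n"
    using A B cols_dim by blast+
  have "set (cols B) \<subseteq> set (cols A)" unfolding B_def by (rule set_cols_select_cols[OF A js(2)])
  moreover have "set (cols A) \<subseteq> span (set (cols B))"
  proof
    fix v assume "v \<in> set (cols A)"
    then obtain j where j: "j < nc" "v = col A j" using A by (auto simp: in_set_conv_nth)
    show "v \<in> span (set (cols B))"
    proof (cases "j \<in> set js")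
      case True
      then obtain c where "c < length js" "js ! c = j" by (metis in_set_conv_nth)
      then have "v = col B c" using j unfolding B_def by (simp add: col_select_cols)
      then have "v \<in> set (cols B)"
        using B \<open>c < length js\<close> by (metis cols_length cols_nth nth_mem carrier_matD(2))
      then show ?thesis using span_mem[OF cols_carrier(2)] by simp
    next
      case False
      then obtain x where x: "x \<in> carrier_vec nc" "A *\<^sub>v x = 0\<^sub>v n" "x $ j = 1"
        and supp: "\<forall>i<nc. i \<notin> set js \<longrightarrow> i \<noteq> j \<longrightarrow> x $ i = 0"
        using dep[OF j(1)] by blast
      define x' where "x' = vec nc (\<lambda>i. if i = j then 0 else - x $ i)"
      have x': "x' \<in> carrier_vec nc" by (simp add: x'_def)
      have "v = A *\<^sub>v x'" unfolding j(2) x'_def by (rule col_eq_mult_vec_of_kernel[OF A x j(1)])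
      also have "\<dots> = B *\<^sub>v vec (length js) (\<lambda>c. x' $ (js ! c))"
        unfolding B_def using supp False by (intro mult_vec_select_cols[OF A x' js]) (auto simp: x'_def)
      also have "\<dots> = lincomb (\<lambda>a. vec (length js) (\<lambda>c. x' $ (js ! c)) $ find_first a (cols B)) (set (cols B))"
        by (rule lincomb_eq_mat_mult[OF B _ distinct[folded B_def], symmetric]) simp
      finally show ?thesis by (intro in_spanI) auto
    qed
  qed
  ultimately have "span (set (cols A)) = span (set (cols B))"
    using cols_carrier by (intro equalityI span_is_monotone span_is_subset span_is_submodule)
  then show ?thesis unfolding rank_def B_def by simp
qed

(* The columns indexed by J are independent (ker) and span all other columns (dep). *)
lemma rank_eq_card_basis_columns:
  assumes A: "A \<in> carrier_mat n nc" and J: "J \<subseteq> {..<nc}"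
    and ker: "\<And>x. x \<in> carrier_vec nc \<Longrightarrow> A *\<^sub>v x = 0\<^sub>v n \<Longrightarrow>
       (\<And>j. j < nc \<Longrightarrow> j \<notin> J \<Longrightarrow> x $ j = 0) \<Longrightarrow> x = 0\<^sub>v nc"
    and dep: "\<And>j. j < nc \<Longrightarrow> j \<notin> J \<Longrightarrow> \<exists>x \<in> carrier_vec nc. A *\<^sub>v x = 0\<^sub>v n \<and>
       x $ j = 1 \<and> (\<forall>i<nc. i \<notin> J \<longrightarrow> i \<noteq> j \<longrightarrow> x $ i = 0)"
  shows "rank A = card J"
proof -
  define js where "js = sorted_list_of_set J"
  have "finite J" by (rule finite_subset[OF J]) simp
  then have js: "distinct js" "set js = J" "length js = card J" by (simp_all add: js_def)
  have B: "select_cols A js \<in> carrier_mat n (length js)" by (rule select_cols_carrier[OF A])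
  have sub: "set js \<subseteq> {..<nc}" using js(2) J by simp
  have trivial: "y = 0\<^sub>v (length js)"
    if "y \<in> carrier_vec (length js)" "select_cols A js *\<^sub>v y = 0\<^sub>v n" for y
  proof (rule select_cols_trivial_kernel[OF A js(1) sub _ that])
    fix x assume "x \<in> carrier_vec nc" "A *\<^sub>v x = 0\<^sub>v n" "\<And>i. i < nc \<Longrightarrow> i \<notin> set js \<Longrightarrow> x $ i = 0"
    then show "x = 0\<^sub>v nc" using ker js(2) by blast
  qed
  have "rank A = rank (select_cols A js)"
  proof (rule rank_select_cols_eq[OF A js(1) sub rank_of_trivial_kernel(1)[OF B trivial]])
    fix j assume "j < nc" "j \<notin> set js"
    then show "\<exists>x\<in>carrier_vec nc. A *\<^sub>v x = 0\<^sub>v n \<and> x $ j = 1 \<and>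
        (\<forall>i<nc. i \<notin> set js \<longrightarrow> i \<noteq> j \<longrightarrow> x $ i = 0)"
      using dep js(2) by blast
  qed
  also have "\<dots> = card J"
    using rank_of_trivial_kernel(2)[OF B trivial] js(3) by simp
  finally show ?thesis .
qed

end

section \<open>The matrix W\<close>

locale nonempty_composition =
  fixes \<alpha> :: "nat list" and m :: nat
  assumes composition: "\<alpha> \<in> compositions m" and nonempty: "\<alpha> \<noteq> []"
begin

lemma sum_list_eq: "sum_list \<alpha> = m"
  using composition by (simp add: compositions_def)

lemma block_pos: "t < length \<alpha> \<Longrightarrow> 0 < \<alpha> ! t"
  using composition by (auto simp: compositions_def)

lemma num_odd_le: "num_odd \<alpha> \<le> m"
proof -
  have "length \<alpha> \<le> m" using composition length_le_sum_list sum_list_eq by (auto simp: compositions_def)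
  then show ?thesis unfolding num_odd_def using length_filter_le order_trans by blast
qed

lemma sig2_Ax:
  assumes "t < length \<alpha>"
  shows "sig2 (Ax \<alpha> (Suc t)) = texp (block_log (block_start \<alpha> t) (\<alpha> ! t))"
  unfolding Ax_def Let_def block_start_def
  using sig2_block_path[OF block_pos[OF assms]] by (simp del: upt_Suc)

lemma block_log_g2:
  assumes "t < length \<alpha>"
  shows "block_log (block_start \<alpha> t) (\<alpha> ! t) \<in> g2 m"
proof -
  have "block_start \<alpha> t + \<alpha> ! t \<le> m" using block_start_add_le[OF assms] sum_list_eq by simp
  then show ?thesis by (auto simp: block_log_def g2_iff in_block_def order_sign_def)
qed

lemma in_block_iff_block_of:
  assumes "k < m" "t < length \<alpha>"
  shows "in_block (block_start \<alpha> t) (\<alpha> ! t) (Suc k) \<longleftrightarrow> block_of \<alpha> k = t"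
  using block_of_iff[of k \<alpha> t] assms sum_list_eq by (auto simp: in_block_def)

definition block_logs :: "tens2 list" where
  "block_logs = map (\<lambda>t. block_log (block_start \<alpha> t) (\<alpha> ! t)) [0..<length \<alpha>]"

lemma block_logs_g2: "set block_logs \<subseteq> g2 m"
  using block_log_g2 by (auto simp: block_logs_def)

lemma W_eq_tmean_block_logs: "W \<alpha> = snd (snd (texp (tmean block_logs)))"
proof -
  have "map (\<lambda>i. sig2 (Ax \<alpha> i)) [1..<length \<alpha> + 1] = map texp block_logs"
    unfolding block_logs_def by (simp add: map_Suc_upt[symmetric] sig2_Ax del: upt_Suc)
  moreover have "block_logs \<noteq> []" using nonempty by (simp add: block_logs_def)
  ultimately show ?thesis
    unfolding W_def sum_list_eq by (simp add: bary_texp block_logs_g2)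
qed

lemma sum_block_logs:
  assumes "k < m"
  shows "(\<Sum>t<length \<alpha>. if in_block (block_start \<alpha> t) (\<alpha> ! t) (Suc k) then f t else 0)
    = (f (block_of \<alpha> k) :: real)"
proof -
  have "(\<Sum>t<length \<alpha>. if in_block (block_start \<alpha> t) (\<alpha> ! t) (Suc k) then f t else 0)
      = (\<Sum>t<length \<alpha>. if t = block_of \<alpha> k then f t else 0)"
    using assms by (intro sum.cong) (auto simp: in_block_iff_block_of)
  also have "\<dots> = f (block_of \<alpha> k)"
    using block_of_less[of k \<alpha>] assms sum_list_eq by simp
  finally show ?thesis .
qed

lemma tmean_block_logs:
  assumes "i < m" "j < m"
  shows "fst (snd (tmean block_logs)) (Suc i) = 1 / length \<alpha>"
    and "snd (snd (tmean block_logs)) (Suc i) (Suc j) =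
      (if block_of \<alpha> i = block_of \<alpha> j then order_sign i j / 2 else 0) / length \<alpha>"
proof -
  have sums: "sum_list (map f block_logs) = (\<Sum>t<length \<alpha>. f (block_log (block_start \<alpha> t) (\<alpha> ! t)))"
    for f :: "tens2 \<Rightarrow> real"
    by (simp add: block_logs_def sum_list_sum_nth atLeast0LessThan)
  have len: "length block_logs = length \<alpha>" by (simp add: block_logs_def)
  show "fst (snd (tmean block_logs)) (Suc i) = 1 / length \<alpha>"
    using sum_block_logs[OF assms(1), of "\<lambda>_. 1"] len
    by (simp add: tmean_def tscale_def tsum_map[of id, simplified] sums block_log_def)
  have "(\<Sum>t<length \<alpha>. if in_block (block_start \<alpha> t) (\<alpha> ! t) (Suc i) \<and>
        in_block (block_start \<alpha> t) (\<alpha> ! t) (Suc j) then order_sign (Suc i) (Suc j) / 2 else 0)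
    = (\<Sum>t<length \<alpha>. if in_block (block_start \<alpha> t) (\<alpha> ! t) (Suc i)
       then (if in_block (block_start \<alpha> t) (\<alpha> ! t) (Suc j) then order_sign i j / 2 else 0) else 0)"
    by (intro sum.cong) (auto simp: order_sign_Suc)
  also have "\<dots> = (if in_block (block_start \<alpha> (block_of \<alpha> i)) (\<alpha> ! block_of \<alpha> i) (Suc j)
       then order_sign i j / 2 else 0)"
    by (rule sum_block_logs[OF assms(1)])
  also have "\<dots> = (if block_of \<alpha> i = block_of \<alpha> j then order_sign i j / 2 else 0)"
    using assms block_of_less[of i \<alpha>] sum_list_eq by (auto simp: in_block_iff_block_of)
  finally show "snd (snd (tmean block_logs)) (Suc i) (Suc j) =
      (if block_of \<alpha> i = block_of \<alpha> j then order_sign i j / 2 else 0) / length \<alpha>"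
    using len by (simp add: tmean_def tscale_def tsum_map[of id, simplified] sums block_log_def)
qed

lemma W_entry:
  assumes "i < m" "j < m"
  shows "W \<alpha> (Suc i) (Suc j) =
    (if block_of \<alpha> i = block_of \<alpha> j then order_sign i j / (2 * length \<alpha>) else 0)
    + 1 / (2 * (length \<alpha>)\<^sup>2)"
proof -
  obtain v A where mean: "tmean block_logs = (0, v, A)"
    using tmean_g2[OF block_logs_g2] by (metis g2_iff prod_cases3)
  then have "W \<alpha> (Suc i) (Suc j) = A (Suc i) (Suc j) + v (Suc i) * v (Suc j) / 2"
    unfolding W_eq_tmean_block_logs by (simp add: texp_lie)
  then show ?thesis
    using tmean_block_logs[OF assms] tmean_block_logs(1)[OF assms(2) assms(1)]
    by (simp add: mean power2_eq_square)
qed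

lemma W_mat_carrier: "W_mat m \<alpha> \<in> carrier_mat m m"
  by (simp add: W_mat_def)

lemma block_last:
  assumes "t < length \<alpha>"
  shows "block_of \<alpha> (block_last \<alpha> t) = t" and "block_last \<alpha> t < m"
  using block_of_block_start_add[OF assms, of "\<alpha> ! t - 1"] block_pos[OF assms] sum_list_eq
  by (simp_all add: block_last_def)

lemma W_mat_mult_vec_block:
  assumes x: "x \<in> carrier_vec m" and t: "t < length \<alpha>" and p: "p < \<alpha> ! t"
  shows "(W_mat m \<alpha> *\<^sub>v x) $ (block_start \<alpha> t + p) =
    ((\<Sum>q<\<alpha> ! t. order_sign p q * x $ (block_start \<alpha> t + q)) + (\<Sum>j<m. x $ j) / length \<alpha>)
    / (2 * length \<alpha>)"
proof -
  define N where "N = real (length \<alpha>)"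
  define i where "i = block_start \<alpha> t + p"
  have i: "i < m" "block_of \<alpha> i = t"
    using block_of_block_start_add[OF t p] sum_list_eq by (simp_all add: i_def)
  have "N > 0" using nonempty by (simp add: N_def)
  have "(W_mat m \<alpha> *\<^sub>v x) $ i = (\<Sum>j<m. W_mat m \<alpha> $$ (i, j) * x $ j)"
    by (rule mult_mat_vec_entry[OF W_mat_carrier x i(1)])
  also have "\<dots> = (\<Sum>j<m. W \<alpha> (Suc i) (Suc j) * x $ j)"
    using i(1) by (intro sum.cong refl) (simp add: W_mat_def)
  also have "\<dots> = (\<Sum>j<m. (if block_of \<alpha> j = t then order_sign i j * x $ j else 0) / (2 * N)
      + x $ j / (2 * N\<^sup>2))"
    using i by (intro sum.cong refl) (auto simp: W_entry N_def algebra_simps)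
  also have "\<dots> = (\<Sum>j<m. if block_of \<alpha> j = t then order_sign i j * x $ j else 0) / (2 * N)
      + (\<Sum>j<m. x $ j) / (2 * N\<^sup>2)"
    by (simp add: sum.distrib sum_divide_distrib)
  also have "(\<Sum>j<m. if block_of \<alpha> j = t then order_sign i j * x $ j else 0) =
      (\<Sum>q<\<alpha> ! t. order_sign p q * x $ (block_start \<alpha> t + q))"
    using sum_same_block[OF t, of "\<lambda>j. order_sign i j * x $ j"] sum_list_eq
    by (simp add: i_def order_sign_add)
  finally show ?thesis
    using \<open>N > 0\<close> by (simp add: i_def N_def field_simps power2_eq_square)
qed

lemma W_mat_kernel_iff:
  assumes x: "x \<in> carrier_vec m"
  shows "W_mat m \<alpha> *\<^sub>v x = 0\<^sub>v m \<longleftrightarrow> alternating_on_blocks \<alpha> (\<lambda>j. x $ j) \<and>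
    (\<forall>t<length \<alpha>. (\<Sum>j<m. x $ j) / length \<alpha> = (if even (\<alpha> ! t) then x $ block_start \<alpha> t else 0))"
proof -
  let ?s = "(\<Sum>j<m. x $ j) / length \<alpha>"
  have "W_mat m \<alpha> *\<^sub>v x = 0\<^sub>v m \<longleftrightarrow>
      (\<forall>t<length \<alpha>. \<forall>p<\<alpha> ! t. (W_mat m \<alpha> *\<^sub>v x) $ (block_start \<alpha> t + p) = 0)"
  proof
    assume zero: "W_mat m \<alpha> *\<^sub>v x = 0\<^sub>v m"
    show "\<forall>t<length \<alpha>. \<forall>p<\<alpha> ! t. (W_mat m \<alpha> *\<^sub>v x) $ (block_start \<alpha> t + p) = 0"
    proof (intro allI impI)
      fix t p assume "t < length \<alpha>" "p < \<alpha> ! t"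
      then have "block_start \<alpha> t + p < m" using block_of_block_start_add(2) sum_list_eq by metis
      then show "(W_mat m \<alpha> *\<^sub>v x) $ (block_start \<alpha> t + p) = 0" using zero by simp
    qed
  next
    assume zero: "\<forall>t<length \<alpha>. \<forall>p<\<alpha> ! t. (W_mat m \<alpha> *\<^sub>v x) $ (block_start \<alpha> t + p) = 0"
    show "W_mat m \<alpha> *\<^sub>v x = 0\<^sub>v m"
    proof (rule eq_vecI)
      fix i assume "i < dim_vec (0\<^sub>v m :: real vec)"
      then have "i < sum_list \<alpha>" using sum_list_eq by simp
      then obtain t q where "t < length \<alpha>" "q < \<alpha> ! t" "i = block_start \<alpha> t + q"
        by (rule block_decomp)
      then show "(W_mat m \<alpha> *\<^sub>v x) $ i = 0\<^sub>v m $ i" using zero \<open>i < sum_list \<alpha>\<close> sum_list_eq by simp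
    qed (simp add: W_mat_def)
  qed
  also have "\<dots> \<longleftrightarrow> (\<forall>t<length \<alpha>. \<forall>p<\<alpha> ! t.
      (\<Sum>q<\<alpha> ! t. order_sign p q * x $ (block_start \<alpha> t + q)) + ?s = 0)"
    using nonempty by (simp add: W_mat_mult_vec_block[OF x])
  also have "\<dots> \<longleftrightarrow> (\<forall>t<length \<alpha>. (\<forall>q<\<alpha> ! t. x $ (block_start \<alpha> t + q) = (-1) ^ q * x $ block_start \<alpha> t)
      \<and> ?s = (if even (\<alpha> ! t) then x $ block_start \<alpha> t else 0))"
    using skew_system_iff[OF block_pos, where y = "\<lambda>q. x $ (block_start \<alpha> _ + q)"] by simp
  finally show ?thesis unfolding alternating_on_blocks_def by blast
qed

lemma W_mat_kernel_eq_0: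
  assumes x: "x \<in> carrier_vec m" and kernel: "W_mat m \<alpha> *\<^sub>v x = 0\<^sub>v m"
    and t0: "t0 < length \<alpha>" "odd (\<alpha> ! t0)"
    and at_last: "\<And>t. t < length \<alpha> \<Longrightarrow> odd (\<alpha> ! t) \<Longrightarrow> t \<noteq> t0 \<Longrightarrow> x $ block_last \<alpha> t = 0"
  shows "x = 0\<^sub>v m"
proof -
  have alt: "alternating_on_blocks \<alpha> (\<lambda>j. x $ j)"
    and mean: "\<And>t. t < length \<alpha> \<Longrightarrow>
      (\<Sum>j<m. x $ j) / length \<alpha> = (if even (\<alpha> ! t) then x $ block_start \<alpha> t else 0)"
    using kernel W_mat_kernel_iff[OF x] by auto
  have "(\<Sum>j<m. x $ j) = 0" using mean[OF t0(1)] t0(2) nonempty by simp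
  have start_0: "x $ block_start \<alpha> t = 0" if "t < length \<alpha>" "t \<noteq> t0" for t
  proof (cases "even (\<alpha> ! t)")
    case True
    then show ?thesis using mean[OF that(1)] \<open>(\<Sum>j<m. x $ j) = 0\<close> by simp
  next
    case False
    have "\<alpha> ! t - 1 < \<alpha> ! t" using block_pos[OF that(1)] by simp
    then have "x $ block_last \<alpha> t = (-1) ^ (\<alpha> ! t - 1) * x $ block_start \<alpha> t"
      using alt that(1) unfolding alternating_on_blocks_def block_last_def by blast
    then show ?thesis using at_last[OF that(1) False that(2)] False block_pos[OF that(1)] by simp
  qed
  have "(\<Sum>j<m. x $ j) = (\<Sum>t<length \<alpha>. if odd (\<alpha> ! t) then x $ block_start \<alpha> t else 0)"
    using sum_alternating_on_blocks[OF alt] sum_list_eq by simp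
  also have "\<dots> = (\<Sum>t<length \<alpha>. if t = t0 then x $ block_start \<alpha> t0 else 0)"
    by (intro sum.cong refl) (use start_0 t0(2) in auto)
  also have "\<dots> = x $ block_start \<alpha> t0" using t0(1) by simp
  finally have "x $ block_start \<alpha> t = 0" if "t < length \<alpha>" for t
    using start_0 that \<open>(\<Sum>j<m. x $ j) = 0\<close> by (cases "t = t0") auto
  show ?thesis
  proof (rule eq_vecI)
    fix i assume "i < dim_vec (0\<^sub>v m :: real vec)"
    then show "x $ i = 0\<^sub>v m $ i"
      using alternating_on_blocks_eq_0[OF alt \<open>\<And>t. t < length \<alpha> \<Longrightarrow> x $ block_start \<alpha> t = 0\<close>]
        sum_list_eq by simp
  qed (use x in simp)
qed

lemma W_mat_kernel_vector:
  assumes t0: "t0 < length \<alpha>" "odd (\<alpha> ! t0)" and t1: "t1 < length \<alpha>" "odd (\<alpha> ! t1)"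
    and "t0 \<noteq> t1"
  obtains w where "w \<in> carrier_vec m" "W_mat m \<alpha> *\<^sub>v w = 0\<^sub>v m"
    "\<And>t q. t < length \<alpha> \<Longrightarrow> q < \<alpha> ! t \<Longrightarrow>
       w $ (block_start \<alpha> t + q) = (if t = t1 then (-1) ^ q else if t = t0 then - ((-1) ^ q) else 0)"
proof -
  define w where "w = vec m (\<lambda>i. if block_of \<alpha> i = t1 then (-1::real) ^ (i - block_start \<alpha> t1)
    else if block_of \<alpha> i = t0 then - ((-1) ^ (i - block_start \<alpha> t0)) else 0)"
  have w: "w \<in> carrier_vec m" by (simp add: w_def)
  have entries: "w $ (block_start \<alpha> t + q) = (if t = t1 then (-1) ^ q else if t = t0 then - ((-1) ^ q) else 0)"
    if "t < length \<alpha>" "q < \<alpha> ! t" for t q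
    using block_of_block_start_add[OF that] sum_list_eq by (auto simp: w_def)
  have start: "w $ block_start \<alpha> t = (if t = t1 then 1 else if t = t0 then -1 else 0)"
    if "t < length \<alpha>" for t
    using entries[OF that block_pos[OF that]] by simp
  have alt: "alternating_on_blocks \<alpha> (\<lambda>j. w $ j)"
    unfolding alternating_on_blocks_def using entries start by simp
  have "(\<Sum>j<m. w $ j) = (\<Sum>t<length \<alpha>. if odd (\<alpha> ! t) then w $ block_start \<alpha> t else 0)"
    using sum_alternating_on_blocks[OF alt] sum_list_eq by simp
  also have "\<dots> = (\<Sum>t<length \<alpha>. (if t = t1 then 1 else 0) - (if t = t0 then 1 else 0))"
    by (intro sum.cong refl) (use start t0(2) t1(2) \<open>t0 \<noteq> t1\<close> in auto)
  also have "\<dots> = 0" using t0(1) t1(1) by (simp add: sum_subtractf)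
  finally have "W_mat m \<alpha> *\<^sub>v w = 0\<^sub>v m"
    unfolding W_mat_kernel_iff[OF w] using alt start t0(2) t1(2) by auto
  with w entries show ?thesis using that by blast
qed

lemma rank_W_mat_all_even:
  assumes even: "\<forall>a\<in>set \<alpha>. even a"
  shows "vec_space.rank m (W_mat m \<alpha>) = m"
proof -
  have "vec_space.rank m (W_mat m \<alpha>) = card {..<m}"
  proof (rule vec_space.rank_eq_card_basis_columns[OF W_mat_carrier subset_refl])
    fix x :: "real vec" assume x: "x \<in> carrier_vec m" and "W_mat m \<alpha> *\<^sub>v x = 0\<^sub>v m"
    then have alt: "alternating_on_blocks \<alpha> (\<lambda>j. x $ j)"
      and mean: "\<And>t. t < length \<alpha> \<Longrightarrow> (\<Sum>j<m. x $ j) / length \<alpha> = x $ block_start \<alpha> t"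
      using W_mat_kernel_iff[OF x] even by (auto simp: nth_mem)
    have "(\<Sum>j<m. x $ j) = 0"
      using sum_alternating_on_blocks[OF alt] sum_list_eq even by (simp add: nth_mem)
    then have "x $ block_start \<alpha> t = 0" if "t < length \<alpha>" for t
      using mean[OF that] by simp
    show "x = 0\<^sub>v m"
    proof (rule eq_vecI)
      fix i assume "i < dim_vec (0\<^sub>v m :: real vec)"
      then show "x $ i = 0\<^sub>v m $ i"
        using alternating_on_blocks_eq_0[OF alt \<open>\<And>t. t < length \<alpha> \<Longrightarrow> x $ block_start \<alpha> t = 0\<close>]
          sum_list_eq by simp
    qed (use x in simp)
  qed auto
  then show ?thesis by simp
qed

lemma rank_W_mat_some_odd:
  assumes "\<not> (\<forall>a\<in>set \<alpha>. even a)"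
  shows "vec_space.rank m (W_mat m \<alpha>) = m - num_odd \<alpha> + 1"
proof -
  define Odd where "Odd = {t. t < length \<alpha> \<and> odd (\<alpha> ! t)}"
  define t0 where "t0 = Min Odd"
  \<comment> \<open>a kernel vector alternating on two odd blocks expresses each column outside J,
    the last column of an odd block other than the first one, through the columns in J\<close>
  define J where "J = {..<m} - block_last \<alpha> ` (Odd - {t0})"
  have "finite Odd" "Odd \<noteq> {}"
    using assms by (auto simp: Odd_def in_set_conv_nth)
  then have t0: "t0 \<in> Odd" by (simp add: t0_def)
  have "vec_space.rank m (W_mat m \<alpha>) = card J"
  proof (rule vec_space.rank_eq_card_basis_columns[OF W_mat_carrier])
    fix x :: "real vec" assume x: "x \<in> carrier_vec m" "W_mat m \<alpha> *\<^sub>v x = 0\<^sub>v m"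
      and off_J: "\<And>j. j < m \<Longrightarrow> j \<notin> J \<Longrightarrow> x $ j = 0"
    show "x = 0\<^sub>v m"
      using t0 block_last(2) by (intro W_mat_kernel_eq_0[OF x, of t0] off_J) (auto simp: Odd_def J_def)
  next
    fix j assume "j < m" "j \<notin> J"
    then obtain t1 where t1: "t1 \<in> Odd" "t1 \<noteq> t0" "j = block_last \<alpha> t1" by (auto simp: J_def)
    obtain w where w: "w \<in> carrier_vec m" "W_mat m \<alpha> *\<^sub>v w = 0\<^sub>v m"
      and entries: "\<And>t q. t < length \<alpha> \<Longrightarrow> q < \<alpha> ! t \<Longrightarrow> w $ (block_start \<alpha> t + q) =
        (if t = t1 then (-1) ^ q else if t = t0 then - ((-1) ^ q) else 0)"
      using W_mat_kernel_vector[of t0 t1] t0 t1 by (auto simp: Odd_def)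
    have at_last: "w $ block_last \<alpha> t = (if t = t1 then 1 else if t = t0 then -1 else 0)"
      if "t \<in> Odd" for t
      using that entries[of t "\<alpha> ! t - 1"] block_pos[of t] by (auto simp: Odd_def block_last_def)
    show "\<exists>x\<in>carrier_vec m. W_mat m \<alpha> *\<^sub>v x = 0\<^sub>v m \<and> x $ j = 1 \<and>
        (\<forall>i<m. i \<notin> J \<longrightarrow> i \<noteq> j \<longrightarrow> x $ i = 0)"
      using w t1 at_last by (auto simp: J_def)
  qed (auto simp: J_def)
  also have "card J = m - (card Odd - 1)"
  proof -
    have "inj_on (block_last \<alpha>) Odd"
      using block_last(1) by (metis (mono_tags, lifting) Odd_def inj_onI mem_Collect_eq)
    then have "card (block_last \<alpha> ` (Odd - {t0})) = card Odd - 1"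
      using t0 \<open>finite Odd\<close> by (simp add: card_image inj_on_diff)
    moreover have "block_last \<alpha> ` (Odd - {t0}) \<subseteq> {..<m}" using block_last(2) by (auto simp: Odd_def)
    ultimately show ?thesis unfolding J_def by (simp add: card_Diff_subset finite_subset)
  qed
  also have "card Odd = num_odd \<alpha>"
    unfolding Odd_def num_odd_def by (simp add: length_filter_conv_card)
  also have "m - (num_odd \<alpha> - 1) = m - num_odd \<alpha> + 1"
  proof -
    have "1 \<le> card Odd" using \<open>finite Odd\<close> \<open>Odd \<noteq> {}\<close> by (simp add: Suc_le_eq card_gt_0_iff)
    with num_odd_le \<open>card Odd = num_odd \<alpha>\<close> show ?thesis by linarith
  qed
  finally show ?thesis .
qed

end

theorem corollary7p11:
  fixes m :: nat and \<alpha> :: "nat list"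
  assumes "\<alpha> \<in> compositions m"
  shows "vec_space.rank m (W_mat m \<alpha>) =
           (if (\<forall>x\<in>set \<alpha>. even x) then m else m - num_odd \<alpha> + 1)"
proof (cases "\<alpha> = []")
  case True
  then have "m = 0" using assms by (simp add: compositions_def)
  then show ?thesis
    using vec_space.rank_le_nc[of "W_mat m \<alpha>" m m] True by (simp add: W_mat_def)
next
  case False
  then interpret nonempty_composition \<alpha> m using assms by unfold_locales
  show ?thesis using rank_W_mat_all_even rank_W_mat_some_odd by simp
qed

end
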